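(* Let $s\ge 1$, $q=4^{2s}$, and let $\theta$ be the automorphism of $F_q$ given by $\theta(a)=a^{4^s}$. Let $n$ be an even positive integer and suppose $x^n-1=h(x)g(x)$ in $F_q[x;\theta]$, where the degree of $g(x)$ is even. If $g(x)$ is a palindromic polynomial, then $h(x)$ is a palindromic polynomial.
   Context: $F_q[x;\theta]$ is the skew polynomial ring: polynomials $\sum a_ix^i$ with $a_i\in F_q$, usual addition, and multiplication determined by $xa=\theta(a)x$ for $a\in F_q$. A polynomial $f(x)=a_0+a_1x+\dots+a_tx^t$ of degree $t$ is palindromic if $a_i=a_{t-i}$ for all $i\in\{0,\ldots,t\}$. *)

theory Defs
  imports "HOL-Computational_Algebra.Polynomial"
begin

text \<open>Skew polynomials in F[x;theta] are represented by their coefficient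
polynomial (type 'a poly); addition is the usual one, and multiplication is
determined by x a = theta(a) x, i.e. for f = sum a_i x^i and g = sum b_j x^j,
the k-th coefficient of f g is sum over i+j=k of a_i theta^i(b_j).\<close>

definition skew_mult :: "('a::comm_ring_1 \<Rightarrow> 'a) \<Rightarrow> 'a poly \<Rightarrow> 'a poly \<Rightarrow> 'a poly" where
  "skew_mult \<theta> f g =
     Poly (map (\<lambda>k. \<Sum>i\<le>k. coeff f i * (\<theta> ^^ i) (coeff g (k - i)))
               [0..<degree f + degree g + 1])"

definition palindromic :: "'a::zero poly \<Rightarrow> bool" where
  "palindromic f \<longleftrightarrow> (\<forall>i\<le>degree f. coeff f i = coeff f (degree f - i))"

end

theory Submission
  imports Defs
begin

text \<open>Here \<open>\<theta>\<close> is an involution, since \<open>\<theta>\<^sup>2\<close> is the \<open>q\<close>-th power map, and the field has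
characteristic 2, since \<open>q\<close> is even. For an involution, reversing the coefficients of a skew
product \<open>f g\<close> with \<open>deg f\<close> even gives the skew product of the reversals: the twist \<open>\<theta>\<^sup>i\<close> at
position \<open>i\<close> becomes \<open>\<theta>\<^bsup>deg f - i\<^esup> = \<theta>\<^sup>i\<close>. As \<open>x\<^sup>n - 1 = x\<^sup>n + 1\<close> and \<open>g\<close> are palindromic and
\<open>deg h = n - deg g\<close> is even, this gives \<open>rev(h) g = h g\<close>, and \<open>g\<close> cancels because skew
polynomials over a field have no zero divisors when \<open>\<theta>\<close> is injective.\<close>

lemma funpow_zero_fixed:
  fixes \<theta> :: "'a::zero \<Rightarrow> 'a"
  assumes "\<theta> 0 = 0"
  shows "(\<theta> ^^ i) 0 = 0"
  using assms by (induction i) simp_all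

lemma funpow_eq_0_iff:
  fixes \<theta> :: "'a::zero \<Rightarrow> 'a"
  assumes "\<And>a. \<theta> a = 0 \<longleftrightarrow> a = 0"
  shows "(\<theta> ^^ i) a = 0 \<longleftrightarrow> a = 0"
  using assms by (induction i) simp_all

lemma funpow_involution:
  assumes "\<theta> \<circ> \<theta> = id"
  shows "\<theta> ^^ i = (if even i then id else \<theta>)"
  using assms by (induction i) simp_all

lemma coeff_skew_mult:
  assumes "\<theta> 0 = 0"
  shows "coeff (skew_mult \<theta> f g) j = (\<Sum>i\<le>j. coeff f i * (\<theta> ^^ i) (coeff g (j - i)))"
proof (cases "j \<le> degree f + degree g")
  case False
  have "coeff f i * (\<theta> ^^ i) (coeff g (j - i)) = 0" for i
  proof (cases "i \<le> degree f")
    case True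
    with False have "coeff g (j - i) = 0" by (intro coeff_eq_0) simp
    then show ?thesis by (simp add: funpow_zero_fixed[of \<theta>, OF assms])
  qed (simp add: coeff_eq_0)
  with False show ?thesis
    unfolding skew_mult_def coeff_Poly_eq by (simp add: nth_default_def del: upt_Suc)
qed (simp add: skew_mult_def coeff_Poly_eq nth_default_def del: upt_Suc)

lemma coeff_skew_mult_pairs:
  assumes "\<theta> 0 = 0" and "degree f \<le> K" and "degree g \<le> L"
  shows "coeff (skew_mult \<theta> f g) j =
    (\<Sum>(i, l) \<in> {(i, l). i \<le> K \<and> l \<le> L \<and> i + l = j}. coeff f i * (\<theta> ^^ i) (coeff g l))"
proof -
  let ?F = "\<lambda>(i, l). coeff f i * (\<theta> ^^ i) (coeff g l)"
  have "coeff (skew_mult \<theta> f g) j = sum ?F {(i, l). i + l = j}"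
    unfolding coeff_skew_mult[of \<theta>, OF assms(1)]
    by (rule sum.reindex_bij_witness[of _ "\<lambda>(i, l). i" "\<lambda>i. (i, j - i)"]) auto
  also have "\<dots> = sum ?F {(i, l). i \<le> K \<and> l \<le> L \<and> i + l = j}"
  proof (rule sum.mono_neutral_right)
    show "finite {(i, l). i + l = j}"
      by (rule finite_subset[of _ "{..j} \<times> {..j}"]) auto
    have "?F (i, l) = 0" if "\<not> (i \<le> K \<and> l \<le> L)" for i l
    proof (cases "i \<le> K")
      case True
      with that assms have "coeff g l = 0" by (intro coeff_eq_0) simp
      then show ?thesis by (simp add: funpow_zero_fixed[of \<theta>, OF assms(1)])
    qed (use assms in \<open>simp add: coeff_eq_0\<close>)
    then show "\<forall>p \<in> {(i, l). i + l = j} - {(i, l). i \<le> K \<and> l \<le> L \<and> i + l = j}. ?F p = 0"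
      by auto
  qed auto
  finally show ?thesis .
qed

lemma coeff_skew_mult_top:
  assumes "\<theta> 0 = 0"
  shows "coeff (skew_mult \<theta> f g) (degree f + degree g) =
    lead_coeff f * (\<theta> ^^ degree f) (lead_coeff g)"
proof -
  have "{(i, l). i \<le> degree f \<and> l \<le> degree g \<and> i + l = degree f + degree g} =
      {(degree f, degree g)}"
    by auto
  then show ?thesis
    by (simp add: coeff_skew_mult_pairs[of \<theta>, OF assms order_refl order_refl])
qed

lemma skew_mult_0_left [simp]: "\<theta> 0 = 0 \<Longrightarrow> skew_mult \<theta> 0 g = 0"
  by (simp add: poly_eq_iff coeff_skew_mult)

lemma skew_mult_0_right [simp]: "\<theta> 0 = 0 \<Longrightarrow> skew_mult \<theta> f 0 = 0"
  by (simp add: poly_eq_iff coeff_skew_mult funpow_zero_fixed)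

lemma skew_mult_diff_left:
  assumes "\<theta> 0 = 0"
  shows "skew_mult \<theta> (f - f') g = skew_mult \<theta> f g - skew_mult \<theta> f' g"
  by (simp add: poly_eq_iff coeff_skew_mult[of \<theta>, OF assms] sum_subtractf left_diff_distrib)

context
  fixes \<theta> :: "'a::idom \<Rightarrow> 'a"
  assumes \<theta>_eq_0_iff: "\<And>a. \<theta> a = 0 \<longleftrightarrow> a = 0"
begin

lemma degree_skew_mult:
  assumes "f \<noteq> 0" and "g \<noteq> 0"
  shows "degree (skew_mult \<theta> f g) = degree f + degree g"
proof (rule antisym)
  have "\<theta> 0 = 0" using \<theta>_eq_0_iff[of 0] by simp
  moreover have no_pairs: "{(i, l). i \<le> degree f \<and> l \<le> degree g \<and> i + l = j} = {}"
    if "j > degree f + degree g" for j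
    using that by auto
  ultimately show "degree (skew_mult \<theta> f g) \<le> degree f + degree g"
    by (intro degree_le allI impI)
      (simp add: coeff_skew_mult_pairs[of \<theta>, OF _ order_refl order_refl] no_pairs)
  show "degree f + degree g \<le> degree (skew_mult \<theta> f g)"
    using assms \<open>\<theta> 0 = 0\<close>
    by (intro le_degree) (simp add: coeff_skew_mult_top funpow_eq_0_iff \<theta>_eq_0_iff)
qed

lemma skew_mult_eq_0_iff: "skew_mult \<theta> f g = 0 \<longleftrightarrow> f = 0 \<or> g = 0"
proof
  have "\<theta> 0 = 0" using \<theta>_eq_0_iff[of 0] by simp
  assume "skew_mult \<theta> f g = 0"
  then have "coeff (skew_mult \<theta> f g) (degree f + degree g) = 0" by simp
  then show "f = 0 \<or> g = 0"
    using \<open>\<theta> 0 = 0\<close> by (simp add: coeff_skew_mult_top funpow_eq_0_iff \<theta>_eq_0_iff)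
qed (use \<theta>_eq_0_iff in auto)

lemma skew_mult_right_cancel:
  assumes "g \<noteq> 0"
  shows "skew_mult \<theta> f g = skew_mult \<theta> f' g \<longleftrightarrow> f = f'"
  using assms skew_mult_diff_left[of \<theta> f f' g] skew_mult_eq_0_iff[of "f - f'" g] \<theta>_eq_0_iff[of 0]
  by auto

lemma reflect_poly_skew_mult:
  assumes "\<theta> \<circ> \<theta> = id" and "even (degree f)"
  shows "reflect_poly (skew_mult \<theta> f g) = skew_mult \<theta> (reflect_poly f) (reflect_poly g)"
proof (cases "f = 0 \<or> g = 0")
  case False
  have \<theta>0: "\<theta> 0 = 0" using \<theta>_eq_0_iff[of 0] by simp
  define k m where "k = degree f" and "m = degree g"
  define S where "S j = {(i, l). i \<le> k \<and> l \<le> m \<and> i + l = j}" for j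
  have deg: "degree (skew_mult \<theta> f g) = k + m"
    using False by (simp add: degree_skew_mult k_def m_def)
  have \<theta>_pow_sym: "\<theta> ^^ (k - i) = \<theta> ^^ i" if "i \<le> k" for i
    using that assms by (simp add: funpow_involution k_def)
  have rhs: "coeff (skew_mult \<theta> (reflect_poly f) (reflect_poly g)) j =
      (\<Sum>(i, l) \<in> S j. coeff f (k - i) * (\<theta> ^^ i) (coeff g (m - l)))" for j
    unfolding coeff_skew_mult_pairs[of \<theta>, OF \<theta>0 degree_reflect_poly_le degree_reflect_poly_le]
    by (intro sum.cong) (auto simp: S_def k_def m_def coeff_reflect_poly)
  show ?thesis
  proof (rule poly_eqI)
    fix j
    show "coeff (reflect_poly (skew_mult \<theta> f g)) j =
        coeff (skew_mult \<theta> (reflect_poly f) (reflect_poly g)) j"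
    proof (cases "j \<le> k + m")
      case True
      have "coeff (reflect_poly (skew_mult \<theta> f g)) j = coeff (skew_mult \<theta> f g) (k + m - j)"
        using True by (simp add: coeff_reflect_poly deg)
      also have "\<dots> = (\<Sum>(i, l) \<in> S (k + m - j). coeff f i * (\<theta> ^^ i) (coeff g l))"
        unfolding S_def k_def m_def by (rule coeff_skew_mult_pairs[of \<theta>, OF \<theta>0 order_refl order_refl])
      also have "\<dots> = (\<Sum>(i, l) \<in> S j. coeff f (k - i) * (\<theta> ^^ (k - i)) (coeff g (m - l)))"
        using True
        by (intro sum.reindex_bij_witness[of _ "\<lambda>(i, l). (k - i, m - l)" "\<lambda>(i, l). (k - i, m - l)"])
          (auto simp: S_def)
      also have "\<dots> = coeff (skew_mult \<theta> (reflect_poly f) (reflect_poly g)) j"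
        unfolding rhs by (intro sum.cong) (auto simp: S_def \<theta>_pow_sym)
      finally show ?thesis .
    next
      case False
      then have "S j = {}" by (auto simp: S_def)
      with False show ?thesis by (simp add: rhs coeff_reflect_poly deg)
    qed
  qed
qed (use \<theta>_eq_0_iff in auto)

end

lemma palindromic_iff_reflect_poly: "palindromic f \<longleftrightarrow> reflect_poly f = f"
proof
  assume pal: "palindromic f"
  show "reflect_poly f = f"
  proof (rule poly_eqI)
    fix i
    show "coeff (reflect_poly f) i = coeff f i"
    proof (cases "i \<le> degree f")
      case True
      with pal have "coeff f i = coeff f (degree f - i)" unfolding palindromic_def by blast
      with True show ?thesis by (simp add: coeff_reflect_poly)
    next
      case False
      then have "coeff f i = 0" by (intro coeff_eq_0) simp
      with False show ?thesis by (simp add: coeff_reflect_poly)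
    qed
  qed
next
  assume "reflect_poly f = f"
  then have "coeff f i = coeff f (degree f - i)" if "i \<le> degree f" for i
    using that coeff_reflect_poly[of f i] by simp
  then show "palindromic f"
    unfolding palindromic_def by blast
qed

lemma finite_field_power_card:
  fixes x :: "'a::{field,finite}"
  shows "x ^ card (UNIV :: 'a set) = x"
proof (cases "x = 0")
  case False
  let ?U = "UNIV - {0 :: 'a}"
  have "bij_betw ((*) x) ?U ?U"
    using False by (intro bij_betw_byWitness[where f' = "\<lambda>y. y / x"]) auto
  then have "(\<Prod>y\<in>?U. x * y) = \<Prod>?U"
    by (rule prod.reindex_bij_betw)
  then have "x ^ card ?U * \<Prod>?U = 1 * \<Prod>?U"
    by (simp add: prod.distrib)
  moreover have "\<Prod>?U \<noteq> 0"
    by (simp add: prod_zero_iff)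
  ultimately have "x ^ card ?U = 1"
    by (rule mult_right_cancel[THEN iffD1, rotated])
  have "card (UNIV :: 'a set) = Suc (card ?U)"
  proof -
    have "card ?U = card (UNIV :: 'a set) - 1"
      by (rule card_Diff_singleton) simp_all
    moreover have "0 < card (UNIV :: 'a set)"
      by (simp add: finite_UNIV_card_ge_0)
    ultimately show ?thesis by linarith
  qed
  with \<open>x ^ card ?U = 1\<close> show ?thesis
    by (simp only: power_Suc mult_1_right)
qed (simp add: finite_UNIV_card_ge_0)

lemma finite_field_char_2:
  assumes "even (card (UNIV :: 'a::{field,finite} set))"
  shows "(-1 :: 'a) = 1"
  using finite_field_power_card[of "-1 :: 'a"] assms by simp

lemma finite_field_power_involution:
  assumes "card (UNIV :: 'a::{field,finite} set) = r * r"
  shows "(\<lambda>a :: 'a. a ^ r) \<circ> (\<lambda>a. a ^ r) = id"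
  by (simp add: fun_eq_iff finite_field_power_card assms[symmetric] flip: power_mult)

lemma degree_monom_1_minus_1:
  assumes "n > 0"
  shows "degree (monom 1 n - 1 :: 'a::comm_ring_1 poly) = n"
  using assms by (intro antisym degree_le le_degree) (auto simp: coeff_monom)

lemma palindromic_monom_1_minus_1:
  assumes "(-1 :: 'a::comm_ring_1) = 1" and "n > 0"
  shows "palindromic (monom 1 n - 1 :: 'a poly)"
proof -
  have coeff_eq: "coeff (monom 1 n - 1 :: 'a poly) i = (if i = 0 \<or> i = n then 1 else 0)" for i
    using assms by (auto simp: coeff_monom)
  show ?thesis
    unfolding palindromic_def degree_monom_1_minus_1[OF assms(2)] coeff_eq by auto
qed

theorem corollary1:
  fixes s n :: nat and h g :: "'a::{field,finite} poly"
  assumes "s \<ge> 1"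
    and "card (UNIV :: 'a set) = 4 ^ (2 * s)"
    and "even n" and "n > 0"
    and "monom 1 n - 1 = skew_mult (\<lambda>a. a ^ (4 ^ s)) h g"
    and "even (degree g)"
    and "palindromic g"
  shows "palindromic h"
proof -
  define \<theta> where "\<theta> = (\<lambda>a :: 'a. a ^ (4 ^ s))"
  have \<theta>_eq_0_iff: "\<theta> a = 0 \<longleftrightarrow> a = 0" for a
    by (simp add: \<theta>_def)
  have P_eq: "monom 1 n - 1 = skew_mult \<theta> h g"
    using assms(5) by (simp add: \<theta>_def)
  have "\<theta> \<circ> \<theta> = id"
    unfolding \<theta>_def using assms(2)
    by (intro finite_field_power_involution) (simp add: mult_2 power_add)
  have "(-1 :: 'a) = 1"
    using assms(1,2) by (intro finite_field_char_2) (simp add: power_mult)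
  then have P_palindromic: "palindromic (skew_mult \<theta> h g)"
    using palindromic_monom_1_minus_1 assms(4) P_eq by metis
  have P_degree: "degree (skew_mult \<theta> h g) = n"
    using degree_monom_1_minus_1[OF assms(4), where 'a = 'a] by (simp only: P_eq)
  with assms(4) have "h \<noteq> 0" and "g \<noteq> 0"
    by (auto simp: skew_mult_eq_0_iff \<theta>_eq_0_iff)
  with P_degree have "degree h + degree g = n"
    by (simp add: degree_skew_mult \<theta>_eq_0_iff)
  with assms(3,6) have "even (degree h)"
    by (metis even_add)
  with \<open>\<theta> \<circ> \<theta> = id\<close> P_palindromic assms(7)
  have "skew_mult \<theta> (reflect_poly h) g = skew_mult \<theta> h g"
    by (simp add: reflect_poly_skew_mult \<theta>_eq_0_iff palindromic_iff_reflect_poly)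
  with \<open>g \<noteq> 0\<close> show ?thesis
    by (simp add: skew_mult_right_cancel \<theta>_eq_0_iff palindromic_iff_reflect_poly)
qed

end
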